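(* Let $d=2$, let $M\ge1$ be a real number, let $\alpha,\lambda\in\overline{\mathbb Q}$, and let $|\cdot|_v$ be an absolute value on $\overline{\mathbb Q}$. If $|\alpha|_v\ge\frac{|\lambda|_v}{M}\ge8M$, then for all integers $0\le n_0\le n$, $$\left|\frac{\log M_{n,v}}{2^n}-\frac{\log M_{n_0,v}}{2^{n_0}}\right|\le1+8M.$$
   Context: Define $A_0=\alpha$, $B_0=1$, and for $n\ge0$, $A_{n+1}=A_n^2+\lambda B_n^2$, $B_{n+1}=A_nB_n$ (so $[A_n:B_n]$ is the $n$-th iterate of $\alpha$ under $z\mapsto(z^2+\lambda)/z$). Set $M_{n,v}=\max\{|A_n|_v,|B_n|_v\}$. *)

theory Defs
  imports "HOL-Computational_Algebra.Polynomial" Complex_Main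
begin

definition Qbar :: "complex set" where
  "Qbar = {z. algebraic z}"

definition is_abs_value_on :: "complex set \<Rightarrow> (complex \<Rightarrow> real) \<Rightarrow> bool" where
  "is_abs_value_on S v \<longleftrightarrow>
     (\<forall>x\<in>S. v x \<ge> 0 \<and> (v x = 0 \<longleftrightarrow> x = 0)) \<and>
     (\<forall>x\<in>S. \<forall>y\<in>S. v (x * y) = v x * v y) \<and>
     (\<forall>x\<in>S. \<forall>y\<in>S. v (x + y) \<le> v x + v y)"

fun AB :: "complex \<Rightarrow> complex \<Rightarrow> nat \<Rightarrow> complex \<times> complex" where
  "AB al lam 0 = (al, 1)"
| "AB al lam (Suc n) =
     (let (a, b) = AB al lam n in (a^2 + lam * b^2, a * b))"

definition A :: "complex \<Rightarrow> complex \<Rightarrow> nat \<Rightarrow> complex" where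
  "A al lam n = fst (AB al lam n)"

definition B :: "complex \<Rightarrow> complex \<Rightarrow> nat \<Rightarrow> complex" where
  "B al lam n = snd (AB al lam n)"

definition Mv :: "(complex \<Rightarrow> real) \<Rightarrow> complex \<Rightarrow> complex \<Rightarrow> nat \<Rightarrow> real" where
  "Mv v al lam n = max (v (A al lam n)) (v (B al lam n))"

end

theory Submission
  imports Defs "HOL-Algebra.Finite_Extensions"
begin

text \<open>
  Write \<open>x\<^sub>k = |A\<^sub>k|\<^sub>v\<close>, \<open>y\<^sub>k = |B\<^sub>k|\<^sub>v\<close>, \<open>L = |\<lambda>|\<^sub>v\<close> and \<open>m\<^sub>k = max x\<^sub>k y\<^sub>k\<close>.
  The triangle inequality gives \<open>|x\<^sub>k\<^sup>2 - L y\<^sub>k\<^sup>2| \<le> x\<^sub>k\<^sub>+\<^sub>1 \<le> x\<^sub>k\<^sup>2 + L y\<^sub>k\<^sup>2\<close> and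
  \<open>y\<^sub>k\<^sub>+\<^sub>1 = x\<^sub>k y\<^sub>k\<close>, whence always \<open>m\<^sub>k\<^sup>2 / (1 + L) \<le> m\<^sub>k\<^sub>+\<^sub>1 \<le> (1 + L) m\<^sub>k\<^sup>2\<close>.
  As long as \<open>4M\<^sup>2k \<le> L\<close>, the ratio \<open>x\<^sub>k / y\<^sub>k\<close> stays above \<open>L/M - 2kM\<close>, so \<open>A\<^sub>k\<close>
  dominates and the factor \<open>1 + L\<close> improves to \<open>2\<close>; afterwards \<open>1 + L \<le> 4M\<^sup>2(k + 1)\<close>.
  Either way \<open>|ln m\<^sub>k\<^sub>+\<^sub>1 - 2 ln m\<^sub>k| \<le> 2M + k\<close>, and dividing by \<open>2\<^sup>k\<^sup>+\<^sup>1\<close> and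
  telescoping bounds the total drift of \<open>ln m\<^sub>k / 2\<^sup>k\<close> by \<open>2M + 1\<close>.
\<close>

section \<open>Algebraic numbers are closed under addition and multiplication\<close>

abbreviation complex_ring :: "complex ring" where
  "complex_ring \<equiv> \<lparr>carrier = UNIV, mult = (*), one = 1, zero = 0, add = (+)\<rparr>"

lemma cring_complex_ring: "cring complex_ring"
proof (rule cringI)
  show "abelian_group complex_ring"
    by (rule abelian_groupI) (auto intro: left_minus)
  show "Group.comm_monoid complex_ring"
    by (simp add: Group.monoid.intro monoid.monoid_comm_monoidI)
qed (auto simp: distrib_right)

lemma field_complex_ring: "field complex_ring"
proof (rule cring.cring_fieldI[OF cring_complex_ring])
  show "Units complex_ring = carrier complex_ring - {\<zero>\<^bsub>complex_ring\<^esub>}"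
    unfolding Units_def by auto (metis field_class.field_inverse mult.commute)
qed

lemma ring_complex_ring: "ring complex_ring"
  using cring_complex_ring cring.axioms(1) by blast

lemma complex_ring_a_inv: "\<ominus>\<^bsub>complex_ring\<^esub> x = - x"
  by (rule abelian_group.minus_equality[OF ring.is_abelian_group[OF ring_complex_ring]]) auto

lemma complex_ring_m_inv: "x \<noteq> 0 \<Longrightarrow> inv\<^bsub>complex_ring\<^esub> x = inverse x"
  by (rule monoid.inv_char[OF ring.is_monoid[OF ring_complex_ring]]) auto

lemma complex_ring_nat_pow: "x [^]\<^bsub>complex_ring\<^esub> (n::nat) = x ^ n"
  by (induct n) auto

text \<open>HOL-Algebra lists coefficients from the leading one down.\<close>

lemma complex_ring_eval: "ring.eval complex_ring q x = poly (Poly (rev q)) x"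
proof (induct q)
  case Nil
  then show ?case by (simp add: ring.eval.simps[OF ring_complex_ring])
next
  case (Cons a q)
  then show ?case
    by (simp add: ring.eval.simps[OF ring_complex_ring] complex_ring_nat_pow Poly_snoc poly_monom)
qed

lemma subfield_Rats_complex_ring: "subfield (\<rat>::complex set) complex_ring"
proof (rule field.subfieldI'[OF field_complex_ring])
  show "subring (\<rat>::complex set) complex_ring"
    by (rule ring.subringI[OF ring_complex_ring]) (auto simp: complex_ring_a_inv)
qed (auto simp: complex_ring_m_inv)

lemma algebraic_iff_not_transcendental:
  "algebraic (x::complex) \<longleftrightarrow> \<not> ring.transcendental complex_ring \<rat> x"
proof
  assume "algebraic x"
  then obtain p where p: "\<forall>i. poly.coeff p i \<in> \<rat>" "p \<noteq> 0" "poly p x = 0"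
    using algebraic_altdef by blast
  let ?q = "rev (coeffs p)"
  have "set (coeffs p) \<subseteq> \<rat>"
    using p(1) by (auto simp: coeffs_def)
  moreover have "hd ?q \<noteq> 0"
    using p(2) by (simp add: hd_rev last_coeffs_eq_coeff_degree)
  ultimately have "?q \<in> carrier (\<rat> [X]\<^bsub>complex_ring\<^esub>)"
    unfolding univ_poly_carrier[symmetric] polynomial_def by simp
  moreover have "ring.eval complex_ring ?q x = \<zero>\<^bsub>complex_ring\<^esub>"
    using p(3) by (simp add: complex_ring_eval)
  ultimately show "\<not> ring.transcendental complex_ring \<rat> x"
    using ring.algebraicI[OF ring_complex_ring] p(2) unfolding over_def by auto
next
  assume "\<not> ring.transcendental complex_ring \<rat> x"
  then obtain q where q: "q \<in> carrier (\<rat> [X]\<^bsub>complex_ring\<^esub>)" "q \<noteq> []"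
    "ring.eval complex_ring q x = \<zero>\<^bsub>complex_ring\<^esub>"
    using domain.algebraicE[OF field.axioms(1)[OF field_complex_ring]
        subfieldE(1)[OF subfield_Rats_complex_ring]]
    by (auto simp: over_def)
  have qs: "set q \<subseteq> \<rat>" "hd q \<noteq> 0"
    using q(1,2) unfolding univ_poly_carrier[symmetric] polynomial_def by auto
  have "poly.coeff (Poly (rev q)) (length q - 1) = hd q"
    using q(2) by (simp add: nth_default_def hd_conv_nth rev_nth)
  then have "Poly (rev q) \<noteq> 0"
    using qs(2) by (metis coeff_0)
  moreover have "\<forall>i. poly.coeff (Poly (rev q)) i \<in> \<rat>"
    using qs(1) by (auto simp: nth_default_def) (metis in_mono length_rev nth_mem set_rev)
  moreover have "poly (Poly (rev q)) x = 0"
    using q(3) by (simp add: complex_ring_eval)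
  ultimately show "algebraic x"
    using algebraic_altdef by blast
qed

lemma algebraic_add: "algebraic (x::complex) \<Longrightarrow> algebraic y \<Longrightarrow> algebraic (x + y)"
  and algebraic_mult: "algebraic (x::complex) \<Longrightarrow> algebraic y \<Longrightarrow> algebraic (x * y)"
  using subringE(6,7)[OF subfieldE(1)[OF field.subfield_of_algebraics
        [OF field_complex_ring subfield_Rats_complex_ring]], of x y]
  by (auto simp: algebraic_iff_not_transcendental over_def)

lemma Qbar_one: "1 \<in> Qbar"
  and Qbar_uminus: "a \<in> Qbar \<Longrightarrow> - a \<in> Qbar"
  and Qbar_add: "a \<in> Qbar \<Longrightarrow> b \<in> Qbar \<Longrightarrow> a + b \<in> Qbar"
  and Qbar_mult: "a \<in> Qbar \<Longrightarrow> b \<in> Qbar \<Longrightarrow> a * b \<in> Qbar"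
  by (auto simp: Qbar_def algebraic_add algebraic_mult)

lemma abs_value_one:
  assumes "is_abs_value_on S v" "1 \<in> S"
  shows "v 1 = 1"
proof -
  have "v (1 * 1) = v 1 * v 1"
    using assms unfolding is_abs_value_on_def by blast
  moreover have "v 1 \<noteq> 0"
    using assms unfolding is_abs_value_on_def by simp
  ultimately show ?thesis by simp
qed

lemma abs_value_uminus:
  assumes v: "is_abs_value_on S v" and "1 \<in> S" "- 1 \<in> S" "a \<in> S"
  shows "v (- a) = v a"
proof -
  have mult: "v (b * c) = v b * v c" if "b \<in> S" "c \<in> S" for b c
    using v that unfolding is_abs_value_on_def by blast
  have "v (- 1) ^ 2 = 1"
    using mult[of "- 1" "- 1"] abs_value_one[OF v] assms by (simp add: power2_eq_square)
  moreover have "0 \<le> v (- 1)"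
    using v assms unfolding is_abs_value_on_def by blast
  ultimately have "v (- 1) = 1"
    using power2_eq_1_iff by force
  then show ?thesis
    using mult[of "- 1" a] assms by simp
qed

lemma abs_value_add_ge:
  assumes v: "is_abs_value_on S v" and "1 \<in> S" and uminus: "\<And>z. z \<in> S \<Longrightarrow> - z \<in> S"
    and "a \<in> S" "c \<in> S" "a + c \<in> S"
  shows "v a - v c \<le> v (a + c)"
proof -
  have "v a = v ((a + c) + - c)" by simp
  also have "\<dots> \<le> v (a + c) + v (- c)"
    using v assms(4-6) uminus unfolding is_abs_value_on_def by blast
  also have "v (- c) = v c"
    using abs_value_uminus[OF v] assms uminus by blast
  finally show ?thesis by simp
qed

section \<open>Growth of the size of an orbit\<close>

lemma abs_diff_le_telescope:
  fixes a g :: "nat \<Rightarrow> real"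
  assumes "\<And>k. \<bar>a (Suc k) - a k\<bar> \<le> g k - g (Suc k)" and "n0 \<le> n"
  shows "\<bar>a n - a n0\<bar> \<le> g n0 - g n"
  using assms(2)
proof (induction n rule: dec_induct)
  case base
  then show ?case by simp
next
  case (step n)
  then show ?case
    using assms(1)[of n] by linarith
qed

lemma abs_diff_div_power2_le:
  fixes f :: "nat \<Rightarrow> real" and c :: real
  assumes "0 \<le> c" and "\<And>k. \<bar>f (Suc k) - 2 * f k\<bar> \<le> c + k" and "n0 \<le> n"
  shows "\<bar>f n / 2 ^ n - f n0 / 2 ^ n0\<bar> \<le> c + 1"
proof -
  define g where "g k = (c + k + 1) / 2 ^ k" for k :: nat
  have "\<bar>f (Suc k) / 2 ^ Suc k - f k / 2 ^ k\<bar> \<le> g k - g (Suc k)" for k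
  proof -
    have "\<bar>f (Suc k) / 2 ^ Suc k - f k / 2 ^ k\<bar> = \<bar>f (Suc k) - 2 * f k\<bar> / 2 ^ Suc k"
      by (simp add: field_simps)
    also have "\<dots> \<le> (c + k) / 2 ^ Suc k"
      using assms(2)[of k] by (intro divide_right_mono) auto
    also have "\<dots> = g k - g (Suc k)"
      by (simp add: g_def field_simps)
    finally show ?thesis .
  qed
  then have "\<bar>f n / 2 ^ n - f n0 / 2 ^ n0\<bar> \<le> g n0 - g n"
    using assms(3) by (rule abs_diff_le_telescope)
  moreover have "0 \<le> g n"
    using assms(1) by (simp add: g_def)
  moreover have "g n0 \<le> c + 1"
  proof -
    have "Suc n0 \<le> 2 ^ n0"
      using less_exp by (rule Suc_leI)
    then have "real n0 + 1 \<le> 2 ^ n0"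
      by (metis of_nat_Suc of_nat_le_iff of_nat_numeral of_nat_power add.commute)
    then have "c + n0 + 1 \<le> c * 2 ^ n0 + 2 ^ n0"
      using assms(1) mult_left_mono[of 1 "2 ^ n0" c] by simp
    then show ?thesis
      by (simp add: g_def divide_le_eq algebra_simps)
  qed
  ultimately show ?thesis by linarith
qed

lemma abs_ln_sub_double_le:
  fixes m m' T :: real
  assumes "0 < m" "0 < m'" "1 \<le> T" "m ^ 2 / T \<le> m'" "m' \<le> T * m ^ 2"
  shows "\<bar>ln m' - 2 * ln m\<bar> \<le> ln T"
proof -
  have "ln m' \<le> ln (T * m ^ 2)" "ln (m ^ 2 / T) \<le> ln m'"
    using assms by (subst ln_le_cancel_iff; simp)+
  moreover have "ln (T * m ^ 2) = ln T + 2 * ln m" "ln (m ^ 2 / T) = 2 * ln m - ln T"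
    using assms by (simp_all add: ln_mult ln_div ln_realpow)
  ultimately show ?thesis by linarith
qed

lemma ln_four_sq_mult_le:
  fixes M :: real and k :: nat
  assumes "1 \<le> M"
  shows "ln (4 * M ^ 2 * (real k + 1)) \<le> 2 * M + k"
proof -
  have "ln (4 * M ^ 2 * (real k + 1)) = ln 4 + 2 * ln M + ln (real k + 1)"
    using assms by (simp add: ln_mult ln_realpow add_pos_nonneg)
  moreover have "ln 4 = 2 * ln (2::real)"
    using ln_realpow[of 2 2] by simp
  moreover have "ln M \<le> M - 1" "ln (real k + 1) \<le> k"
    using assms ln_le_minus_one[of M] ln_le_minus_one[of "real k + 1"] by auto
  ultimately show ?thesis
    using ln_2_less_1 by linarith
qed

locale abs_orbit =
  fixes L :: real and x y :: "nat \<Rightarrow> real"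
  assumes L_ge_2: "2 \<le> L"
    and x_nonneg: "0 \<le> x k" and y_nonneg: "0 \<le> y k"
    and x_Suc_le: "x (Suc k) \<le> x k ^ 2 + L * y k ^ 2"
    and x_Suc_ge: "\<bar>x k ^ 2 - L * y k ^ 2\<bar> \<le> x (Suc k)"
    and y_Suc: "y (Suc k) = x k * y k"
    and max_0_pos: "0 < max (x 0) (y 0)"
begin

definition m :: "nat \<Rightarrow> real" where
  "m k = max (x k) (y k)"

lemma le_m: "x k \<le> m k" "y k \<le> m k"
  by (simp_all add: m_def)

lemma m_eq_x: "y k \<le> x k \<Longrightarrow> m k = x k"
  and m_eq_y: "x k \<le> y k \<Longrightarrow> m k = y k"
  by (simp_all add: m_def)

lemma m_pos: "0 < m k"
proof (induction k)
  case 0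
  then show ?case using max_0_pos by (simp add: m_def)
next
  case (Suc k)
  show ?case
  proof (rule ccontr)
    assume "\<not> 0 < m (Suc k)"
    then have "x (Suc k) = 0" "y (Suc k) = 0"
      using le_m[of "Suc k"] x_nonneg[of "Suc k"] y_nonneg[of "Suc k"] by linarith+
    then have "x k ^ 2 = L * y k ^ 2" "x k * y k = 0"
      using x_Suc_ge[of k] y_Suc[of k] by auto
    then have "x k = 0" "y k = 0"
      using L_ge_2 by auto
    with Suc show False by (simp add: m_def)
  qed
qed

lemma m_Suc_le: "m (Suc k) \<le> (1 + L) * m k ^ 2"
proof -
  have sq: "x k ^ 2 \<le> m k ^ 2" "y k ^ 2 \<le> m k ^ 2"
    using le_m x_nonneg y_nonneg by (auto intro: power_mono)
  have "x (Suc k) \<le> m k ^ 2 + L * m k ^ 2"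
    using x_Suc_le[of k] sq mult_left_mono[OF sq(2), of L] L_ge_2 by linarith
  moreover have "y (Suc k) \<le> m k ^ 2"
    using y_Suc[of k] mult_mono[OF le_m] m_pos[of k] y_nonneg[of k]
    by (simp add: power2_eq_square)
  moreover have "0 \<le> L * m k ^ 2"
    using L_ge_2 by simp
  ultimately show ?thesis
    by (simp add: m_def algebra_simps)
qed

lemma m_Suc_ge: "m k ^ 2 / (1 + L) \<le> m (Suc k)"
proof -
  define T where "T = 1 + L"
  have T: "3 \<le> T"
    using L_ge_2 by (simp add: T_def)
  have xy: "0 \<le> x k" "0 \<le> y k"
    using x_nonneg y_nonneg .
  consider "y k \<le> x k" "2 * L * y k ^ 2 \<le> x k ^ 2"
    | "y k \<le> x k" "x k ^ 2 < 2 * L * y k ^ 2"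
    | "x k \<le> y k"
    by linarith
  then have "m k ^ 2 / T \<le> max (x (Suc k)) (y (Suc k))"
  proof cases
    case 1
    have "x k ^ 2 / T \<le> x k ^ 2 / 2"
      using T by (intro divide_left_mono) auto
    also have "\<dots> \<le> x (Suc k)"
      using 1 x_Suc_ge[of k] by simp
    finally show ?thesis
      using m_eq_x[OF 1(1)] by simp
  next
    case 2
    have "2 * L \<le> T ^ 2"
      unfolding T_def power2_eq_square by (simp add: algebra_simps)
    then have "2 * L * y k ^ 2 \<le> T ^ 2 * y k ^ 2"
      by (rule mult_right_mono) simp
    then have "x k ^ 2 \<le> (T * y k) ^ 2"
      using 2 unfolding power_mult_distrib by linarith
    moreover have "0 \<le> T * y k"
      using T xy by simp
    ultimately have "x k \<le> T * y k"
      by (rule power2_le_imp_le)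
    then have "x k * x k \<le> x k * (T * y k)"
      using xy by (intro mult_left_mono)
    then have "x k ^ 2 \<le> y (Suc k) * T"
      by (simp add: y_Suc power2_eq_square mult_ac)
    then have "x k ^ 2 / T \<le> y (Suc k)"
      using T by (simp add: pos_divide_le_eq)
    then show ?thesis
      using m_eq_x[OF 2(1)] by simp
  next
    case 3
    have "1 * 1 \<le> (L - 1) * T"
      using T L_ge_2 by (intro mult_mono) auto
    then have "1 / T \<le> L - 1"
      using T by (simp add: pos_divide_le_eq)
    then have "y k ^ 2 / T \<le> (L - 1) * y k ^ 2"
      using mult_right_mono[of "1 / T" "L - 1" "y k ^ 2"] by simp
    moreover have "x k ^ 2 \<le> y k ^ 2"
      using 3 xy by (intro power_mono) auto
    ultimately show ?thesis
      using x_Suc_ge[of k] m_eq_y[OF 3] by (simp add: algebra_simps)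
  qed
  then show ?thesis
    by (simp add: m_def T_def)
qed

lemma m_Suc_dominant:
  assumes "y k \<le> x k" "2 * L * y k ^ 2 \<le> x k ^ 2"
  shows "m k ^ 2 / 2 \<le> m (Suc k)" "m (Suc k) \<le> 2 * m k ^ 2"
proof -
  have "x k * y k \<le> x k ^ 2"
    using assms(1) x_nonneg by (simp add: power2_eq_square mult_left_mono)
  moreover have "x k ^ 2 / 2 \<le> x (Suc k)" "x (Suc k) \<le> 2 * x k ^ 2"
    using assms x_Suc_ge[of k] x_Suc_le[of k] by auto
  ultimately show "m k ^ 2 / 2 \<le> m (Suc k)" "m (Suc k) \<le> 2 * m k ^ 2"
    using y_Suc[of k] le_m[of "Suc k"] m_eq_x[OF assms(1)] unfolding m_def[of "Suc k"] by auto
qed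

text \<open>
  Each step lowers the ratio \<open>x/y\<close> by at most \<open>L y/x\<close>, which stays below \<open>2M\<close> as long as
  the ratio is at least \<open>L/(2M)\<close>.
\<close>

lemma x_ge_ratio:
  assumes "0 < M" "L / M * y 0 \<le> x 0" "4 * M ^ 2 * k \<le> L"
  shows "(L / M - 2 * real k * M) * y k \<le> x k"
  using assms(3)
proof (induction k)
  case 0
  then show ?case using assms(2) by simp
next
  case (Suc k)
  define r where "r = L / M - 2 * real k * M"
  have "4 * M ^ 2 * k \<le> 4 * M ^ 2 * Suc k"
    by (simp add: mult_left_mono)
  then have k: "4 * M ^ 2 * k \<le> L"
    using Suc.prems by linarith
  then have IH: "r * y k \<le> x k"
    using Suc.IH by (simp add: r_def)
  have "2 * M * r = 2 * L - 4 * M ^ 2 * k"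
    using assms(1) by (simp add: r_def field_simps power2_eq_square)
  then have "L * y k ^ 2 \<le> (2 * M * r) * y k ^ 2"
    using k by (intro mult_right_mono) auto
  also have "\<dots> = 2 * M * (r * y k) * y k"
    by (simp add: power2_eq_square mult_ac)
  also have "\<dots> \<le> 2 * M * x k * y k"
    using IH assms(1) y_nonneg[of k] by (intro mult_right_mono mult_left_mono) auto
  finally have "L * y k ^ 2 \<le> 2 * M * (x k * y k)"
    by (simp add: mult_ac)
  moreover have "r * (x k * y k) \<le> x k ^ 2"
    using mult_left_mono[OF IH x_nonneg[of k]] by (simp add: power2_eq_square mult_ac)
  ultimately have "(r - 2 * M) * y (Suc k) \<le> x (Suc k)"
    using x_Suc_ge[of k] y_Suc[of k] by (simp add: algebra_simps)
  then show ?case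
    by (simp add: r_def algebra_simps)
qed

lemma x_dominant:
  assumes M: "1 \<le> M" and L: "8 * M ^ 2 \<le> L" and x0: "L / M * y 0 \<le> x 0"
    and k: "4 * M ^ 2 * k \<le> L"
  shows "y k \<le> x k" "2 * L * y k ^ 2 \<le> x k ^ 2"
proof -
  define s where "s = L / (2 * M)"
  have "s \<le> L / M - 2 * real k * M"
    using k M by (simp add: s_def field_simps power2_eq_square)
  then have "s * y k \<le> (L / M - 2 * real k * M) * y k"
    using y_nonneg by (rule mult_right_mono)
  also have "\<dots> \<le> x k"
    using x_ge_ratio[OF _ x0 k] M by simp
  finally have sy: "s * y k \<le> x k" .
  have "2 \<le> L / (4 * M ^ 2)"
    using L M by (simp add: field_simps)
  then have "L * 2 \<le> L * (L / (4 * M ^ 2))"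
    using L_ge_2 by (intro mult_left_mono) auto
  also have "\<dots> = s ^ 2"
    by (simp add: s_def power2_eq_square field_simps)
  finally have s2: "2 * L \<le> s ^ 2"
    by (simp add: mult.commute)
  have "2 * M * 1 \<le> 2 * M * (4 * M)"
    using M by (intro mult_left_mono) auto
  then have "2 * M \<le> L"
    using L by (simp add: power2_eq_square algebra_simps)
  then have s1: "1 \<le> s"
    using M by (simp add: s_def le_divide_eq)
  show "y k \<le> x k"
    using sy s1 y_nonneg[of k] mult_right_mono[of 1 s "y k"] by simp
  have "2 * L * y k ^ 2 \<le> (s * y k) ^ 2"
    using s2 by (simp add: power_mult_distrib mult_right_mono)
  also have "\<dots> \<le> x k ^ 2"
    using sy s1 y_nonneg[of k] by (intro power_mono) auto
  finally show "2 * L * y k ^ 2 \<le> x k ^ 2" .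
qed

lemma abs_ln_m_Suc_le:
  assumes M: "1 \<le> M" and L: "8 * M ^ 2 \<le> L" and x0: "L / M * y 0 \<le> x 0"
  shows "\<bar>ln (m (Suc k)) - 2 * ln (m k)\<bar> \<le> 2 * M + k"
proof (cases "4 * M ^ 2 * k \<le> L")
  case True
  then have "\<bar>ln (m (Suc k)) - 2 * ln (m k)\<bar> \<le> ln 2"
    using abs_ln_sub_double_le[OF m_pos m_pos] m_Suc_dominant x_dominant[OF M L x0] by simp
  then show ?thesis
    using ln_2_less_1 M by simp
next
  case False
  have "\<bar>ln (m (Suc k)) - 2 * ln (m k)\<bar> \<le> ln (1 + L)"
    using abs_ln_sub_double_le[OF m_pos m_pos] m_Suc_le m_Suc_ge L_ge_2 by simp
  also have "\<dots> \<le> ln (4 * M ^ 2 * (real k + 1))"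
  proof -
    have "1 + L \<le> 4 * M ^ 2 * (real k + 1)"
      using False one_le_power[OF M, of 2] by (simp add: algebra_simps)
    then show ?thesis
      using L_ge_2 M by (subst ln_le_cancel_iff) auto
  qed
  also have "\<dots> \<le> 2 * M + k"
    by (rule ln_four_sq_mult_le[OF M])
  finally show ?thesis .
qed

end

section \<open>The orbit of \<open>z \<mapsto> (z\<^sup>2 + \<lambda>) / z\<close>\<close>

lemma A_0: "A al lam 0 = al"
  and B_0: "B al lam 0 = 1"
  by (simp_all add: A_def B_def)

lemma A_Suc: "A al lam (Suc n) = A al lam n ^ 2 + lam * B al lam n ^ 2"
  and B_Suc: "B al lam (Suc n) = A al lam n * B al lam n"
  by (simp_all add: A_def B_def split: prod.split)

lemma AB_Qbar:
  assumes "al \<in> Qbar" "lam \<in> Qbar"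
  shows "A al lam n \<in> Qbar \<and> B al lam n \<in> Qbar"
proof (induction n)
  case 0
  then show ?case using assms by (simp add: A_0 B_0 Qbar_one)
next
  case (Suc n)
  then show ?case
    using assms by (simp add: A_Suc B_Suc power2_eq_square Qbar_add Qbar_mult)
qed

lemma abs_orbit_AB:
  assumes v: "is_abs_value_on Qbar v" and "al \<in> Qbar" "lam \<in> Qbar" "2 \<le> v lam"
  shows "abs_orbit (v lam) (\<lambda>k. v (A al lam k)) (\<lambda>k. v (B al lam k))"
proof unfold_locales
  have mult: "v (a * b) = v a * v b" if "a \<in> Qbar" "b \<in> Qbar" for a b
    using v that unfolding is_abs_value_on_def by blast
  have Q: "A al lam k \<in> Qbar" "B al lam k \<in> Qbar" for k
    using AB_Qbar[OF assms(2,3)] by auto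
  show "2 \<le> v lam" by fact
  show "0 \<le> v (A al lam k)" "0 \<le> v (B al lam k)" for k
    using v Q unfolding is_abs_value_on_def by blast+
  show "0 < max (v (A al lam 0)) (v (B al lam 0))"
    using abs_value_one[OF v Qbar_one] by (simp add: B_0)
  show "v (B al lam (Suc k)) = v (A al lam k) * v (B al lam k)" for k
    using mult Q by (simp add: B_Suc)
  fix k
  define a where "a = A al lam k ^ 2"
  define c where "c = lam * B al lam k ^ 2"
  have Qac: "a \<in> Qbar" "c \<in> Qbar" "a + c \<in> Qbar" "c + a \<in> Qbar"
    using Q assms(3) by (simp_all add: a_def c_def power2_eq_square Qbar_add Qbar_mult)
  have "v a = v (A al lam k) ^ 2" "v c = v lam * v (B al lam k) ^ 2"
    using mult Q assms(3) by (simp_all add: a_def c_def power2_eq_square Qbar_mult)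
  moreover have "v (a + c) \<le> v a + v c"
    using v Qac unfolding is_abs_value_on_def by blast
  moreover have "v a - v c \<le> v (a + c)" "v c - v a \<le> v (c + a)"
    using abs_value_add_ge[OF v Qbar_one Qbar_uminus] Qac by auto
  moreover have "A al lam (Suc k) = a + c"
    by (simp add: A_Suc a_def c_def)
  ultimately show "v (A al lam (Suc k)) \<le> v (A al lam k) ^ 2 + v lam * v (B al lam k) ^ 2"
    and "\<bar>v (A al lam k) ^ 2 - v lam * v (B al lam k) ^ 2\<bar> \<le> v (A al lam (Suc k))"
    by (simp_all add: add.commute[of c])
qed

theorem proposition6p4:
  fixes M :: real and al lam :: complex and v :: "complex \<Rightarrow> real" and n0 n :: nat
  assumes "M \<ge> 1"
    and "al \<in> Qbar" and "lam \<in> Qbar"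
    and "is_abs_value_on Qbar v"
    and "v al \<ge> v lam / M" and "v lam / M \<ge> 8 * M"
    and "n0 \<le> n"
  shows "\<bar>ln (Mv v al lam n) / 2 ^ n - ln (Mv v al lam n0) / 2 ^ n0\<bar> \<le> 1 + 8 * M"
proof -
  have L: "8 * M ^ 2 \<le> v lam"
    using assms(1,6) by (simp add: field_simps power2_eq_square)
  moreover have "8 \<le> 8 * M ^ 2"
    using one_le_power[OF assms(1), of 2] by simp
  ultimately interpret orbit: abs_orbit "v lam" "\<lambda>k. v (A al lam k)" "\<lambda>k. v (B al lam k)"
    using abs_orbit_AB assms(2-4) by simp
  have "\<bar>ln (orbit.m (Suc k)) - 2 * ln (orbit.m k)\<bar> \<le> 2 * M + k" for k
    using orbit.abs_ln_m_Suc_le[OF assms(1) L] assms(5)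
      abs_value_one[OF assms(4) Qbar_one] by (simp add: A_0 B_0)
  then have "\<bar>ln (orbit.m n) / 2 ^ n - ln (orbit.m n0) / 2 ^ n0\<bar> \<le> 2 * M + 1"
    using assms(1,7) by (intro abs_diff_div_power2_le) auto
  then show ?thesis
    using assms(1) by (simp add: Mv_def orbit.m_def)
qed

end
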